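(* Let $f$ be a scoring rule on a finite candidate set $C$ with $|C|=m$. Then $f$ is neutral and consistent with linearity if and only if $f$ is induced by a cost function $\mathrm{cost}_f$ such that: (1) for all ballots $A$ and axes $\triangleleft$, $\mathrm{cost}_f(A,\triangleleft)\ge 0$, and $\mathrm{cost}_f(A,\triangleleft)=0$ if and only if $A$ is an interval of $\triangleleft$; (2) for all $A$ and $\triangleleft$, $\mathrm{cost}_f(A,\triangleleft)=\mathrm{cost}_f(A,\overleftarrow{\triangleleft})$; (3) there is a function $g:\{0,1\}^m\to\mathbb R_{\ge0}$ such that for all $A$ and $\triangleleft$, $\mathrm{cost}_f(A,\triangleleft)=g(x_{A,\triangleleft})=g(x_{A,\overleftarrow{\triangleleft}})$.
   Context: Let $C$ be a finite set of $m$ candidates. An approval ballot is a nonempty subset $A\subseteq C$. A profile $P$ is a finite sequence (multiset) of approval ballots. An axis is a strict linear order $\triangleleft$ on $C$; $\overleftarrow{\triangleleft}$ denotes the reverse order; $\mathcal A$ is the set of all axes on $C$. A ballot $A$ is an interval of $\triangleleft$ if for all $a,b\in A$ and every $c$ with $a\triangleleft c\triangleleft b$ we have $c\in A$. A profile is linear if some axis makes all of its ballots intervals; $\mathrm{con}(P)$ is the set of such axes. An axis rule $f$ maps each profile $P$ to a nonempty set $f(P)\subseteq\mathcal A$ such that $\triangleleft\in f(P)$ implies $\overleftarrow{\triangleleft}\in f(P)$. A scoring rule is an axis rule for which there is a cost function $\mathrm{cost}:(2^C\setminus\{\emptyset\})\times\mathcal A\to\mathbb R_{\ge0}$ with $f(P)=\arg\min_{\triangleleft\in\mathcal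 A}\sum_{A\in P}\mathrm{cost}(A,\triangleleft)$ for every profile $P$; we then say $f$ is induced by this cost function. If $\triangleleft=c_1c_2\cdots c_m$ (i.e. $c_1\triangleleft c_2\triangleleft\cdots\triangleleft c_m$), the approval vector $x_{A,\triangleleft}\in\{0,1\}^m$ has $i$-th entry $1$ iff $c_i\in A$. $f$ is neutral if for every permutation $\pi$ of $C$ and every profile $P$, $f(\pi(P))=\pi(f(P))$, where $\pi$ acts on ballots elementwise and on axes by renaming candidates. $f$ is consistent with linearity if $f(P)=\mathrm{con}(P)$ for every linear profile $P$. *)

theory Defs
  imports Complex_Main
begin

text \<open>Candidates are the elements of a finite type 'a (so C = UNIV, m = CARD('a)).
An axis c1 c2 ... cm is represented by a list enumerating all candidates exactly once;
c_i precedes c_j on the axis iff i < j. The reverse axis is rev.\<close>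

definition axes :: "'a::finite list set" where
  "axes = {xs. distinct xs \<and> set xs = UNIV}"

definition ballot :: "'a set \<Rightarrow> bool" where
  "ballot A \<longleftrightarrow> A \<noteq> {}"

definition profile :: "'a set list \<Rightarrow> bool" where
  "profile P \<longleftrightarrow> (\<forall>A\<in>set P. ballot A)"

definition before :: "'a list \<Rightarrow> 'a \<Rightarrow> 'a \<Rightarrow> bool" where
  "before ax a b \<longleftrightarrow> (\<exists>i j. i < j \<and> j < length ax \<and> ax ! i = a \<and> ax ! j = b)"

definition is_interval :: "'a set \<Rightarrow> 'a list \<Rightarrow> bool" where
  "is_interval A ax \<longleftrightarrow>
     (\<forall>a\<in>A. \<forall>b\<in>A. \<forall>c. before ax a c \<and> before ax c b \<longrightarrow> c \<in> A)"

definition con :: "'a::finite set list \<Rightarrow> 'a list set" where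
  "con P = {ax \<in> axes. \<forall>A\<in>set P. is_interval A ax}"

definition linear_profile :: "'a::finite set list \<Rightarrow> bool" where
  "linear_profile P \<longleftrightarrow> con P \<noteq> {}"

definition axis_rule :: "('a::finite set list \<Rightarrow> 'a list set) \<Rightarrow> bool" where
  "axis_rule f \<longleftrightarrow> (\<forall>P. profile P \<longrightarrow>
      f P \<subseteq> axes \<and> f P \<noteq> {} \<and> (\<forall>ax\<in>f P. rev ax \<in> f P))"

definition total_cost :: "('a set \<Rightarrow> 'a list \<Rightarrow> real) \<Rightarrow> 'a set list \<Rightarrow> 'a list \<Rightarrow> real" where
  "total_cost cost P ax = (\<Sum>A\<leftarrow>P. cost A ax)"

definition induced_by :: "('a::finite set list \<Rightarrow> 'a list set) \<Rightarrow> ('a set \<Rightarrow> 'a list \<Rightarrow> real) \<Rightarrow> bool" where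
  "induced_by f cost \<longleftrightarrow>
     (\<forall>A ax. ballot A \<longrightarrow> ax \<in> axes \<longrightarrow> cost A ax \<ge> 0) \<and>
     (\<forall>P. profile P \<longrightarrow>
        f P = {ax \<in> axes. \<forall>ax'\<in>axes. total_cost cost P ax \<le> total_cost cost P ax'})"

definition scoring_rule :: "('a::finite set list \<Rightarrow> 'a list set) \<Rightarrow> bool" where
  "scoring_rule f \<longleftrightarrow> axis_rule f \<and> (\<exists>cost. induced_by f cost)"

definition neutral :: "('a::finite set list \<Rightarrow> 'a list set) \<Rightarrow> bool" where
  "neutral f \<longleftrightarrow> (\<forall>\<pi> P. bij \<pi> \<longrightarrow> profile P \<longrightarrow>
      f (map (\<lambda>A. \<pi> ` A) P) = (map \<pi>) ` f P)"

definition consistent_with_linearity :: "('a::finite set list \<Rightarrow> 'a list set) \<Rightarrow> bool" where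
  "consistent_with_linearity f \<longleftrightarrow> (\<forall>P. profile P \<longrightarrow> linear_profile P \<longrightarrow> f P = con P)"

definition approval_vector :: "'a set \<Rightarrow> 'a list \<Rightarrow> bool list" where
  "approval_vector A ax = map (\<lambda>c. c \<in> A) ax"

end

theory Submission
  imports Defs
begin

text \<open>Backward direction: a cost that depends only on the approval vector is invariant under
relabelling candidates, which gives neutrality; a nonnegative cost vanishing exactly on intervals
makes the optimal axes of a linear profile exactly its consistent axes.
Forward direction: average a given cost over all relabellings and both orientations. By neutrality
and closure of f under reversal, every summand has f P as its set of optimal axes, hence so has
the sum. Subtracting from each ballot's cost its minimum over all axes keeps the optimal axes and
makes the cost zero exactly on the optimal axes of the one-ballot profile [A], i.e. (by
consistency with linearity) exactly on the axes of which A is an interval. The resulting cost is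
relabelling-invariant, and two pairs (A, axis) with equal approval vectors differ by a
relabelling, so the cost factors through the approval vector.\<close>

lemma finite_axes: "finite (axes :: 'a::finite list set)"
proof -
  have "axes \<subseteq> {xs::'a list. set xs \<subseteq> UNIV \<and> length xs \<le> card (UNIV::'a set)}"
    by (auto simp: axes_def dest: distinct_card[symmetric])
  then show ?thesis by (rule finite_subset) (rule finite_lists_length_le, simp)
qed

lemma axes_nonempty: "axes \<noteq> ({} :: 'a::finite list set)"
  using finite_distinct_list[of "UNIV::'a set"] by (auto simp: axes_def)

lemma map_in_axes: "bij \<pi> \<Longrightarrow> ax \<in> axes \<Longrightarrow> map \<pi> ax \<in> axes"
  by (auto simp: axes_def distinct_map bij_is_inj bij_is_surj inj_on_subset)

lemma rev_in_axes: "ax \<in> axes \<Longrightarrow> rev ax \<in> axes"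
  by (auto simp: axes_def)

lemma map_image_axes: "bij (\<pi>::'a::finite \<Rightarrow> 'a) \<Longrightarrow> map \<pi> ` axes = axes"
proof
  assume b: "bij \<pi>"
  show "map \<pi> ` axes \<subseteq> axes" using map_in_axes[OF b] by auto
  show "axes \<subseteq> map \<pi> ` axes"
  proof
    fix ax :: "'a list" assume "ax \<in> axes"
    then have "map (inv \<pi>) ax \<in> axes" using b by (simp add: bij_imp_bij_inv map_in_axes)
    moreover have "ax = map \<pi> (map (inv \<pi>) ax)"
      using b by (simp add: bij_is_surj surj_f_inv_f map_idI)
    ultimately show "ax \<in> map \<pi> ` axes" by blast
  qed
qed

lemma rev_image_axes: "rev ` axes = axes"
  by (auto simp: image_iff intro!: rev_in_axes) (metis rev_in_axes rev_rev_ident)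

definition argmin_axes :: "('a list \<Rightarrow> real) \<Rightarrow> 'a::finite list set" where
  "argmin_axes h = {x\<in>axes. \<forall>y\<in>axes. h x \<le> h y}"

lemma argmin_axes_subset: "argmin_axes h \<subseteq> axes"
  by (auto simp: argmin_axes_def)

lemma argmin_axes_cong: "(\<And>x. x \<in> axes \<Longrightarrow> h x = h' x) \<Longrightarrow> argmin_axes h = argmin_axes h'"
  unfolding argmin_axes_def by force

lemma argmin_axes_diff_const: "argmin_axes (\<lambda>x. h x - (k::real)) = argmin_axes h"
  by (simp add: argmin_axes_def)

lemma argmin_axes_reindex:
  assumes "T ` axes = axes"
  shows "argmin_axes (\<lambda>x. h (T x)) = {x\<in>axes. T x \<in> argmin_axes h}"
  using assms unfolding argmin_axes_def by (auto; metis imageE)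

lemma argmin_axes_sum:
  fixes h :: "'i \<Rightarrow> 'a::finite list \<Rightarrow> real"
  assumes "finite I" "I \<noteq> {}" "M \<noteq> {}" and argmin: "\<And>i. i \<in> I \<Longrightarrow> argmin_axes (h i) = M"
  shows "argmin_axes (\<lambda>x. \<Sum>i\<in>I. h i x) = M"
proof -
  obtain i0 where i0: "i0 \<in> I" using assms(2) by auto
  have M_axes: "M \<subseteq> axes" using argmin[OF i0] argmin_axes_subset by metis
  obtain m where m: "m \<in> M" using assms(3) by auto
  have m_le: "h i m \<le> h i y" if "i \<in> I" "y \<in> axes" for i y
    using argmin[OF that(1)] m that(2) by (auto simp: argmin_axes_def)
  show ?thesis
  proof (intro equalityI subsetI)
    fix x assume "x \<in> M"
    then show "x \<in> argmin_axes (\<lambda>x. \<Sum>i\<in>I. h i x)"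
      using argmin M_axes unfolding argmin_axes_def by (auto intro!: sum_mono)
  next
    fix x assume x: "x \<in> argmin_axes (\<lambda>x. \<Sum>i\<in>I. h i x)"
    then have x_axes: "x \<in> axes" by (auto simp: argmin_axes_def)
    show "x \<in> M"
    proof (rule ccontr)
      assume "x \<notin> M"
      then have "x \<notin> argmin_axes (h i0)" using argmin[OF i0] by simp
      then obtain y where "y \<in> axes" "h i0 y < h i0 x"
        using x_axes by (auto simp: argmin_axes_def not_le)
      then have "h i0 m < h i0 x" using m_le[OF i0] by (meson le_less_trans)
      then have "(\<Sum>i\<in>I. h i m) < (\<Sum>i\<in>I. h i x)"
        using m_le x_axes i0 assms(1) by (intro sum_strict_mono_ex1) auto
      then show False using x m M_axes by (auto simp: argmin_axes_def not_le[symmetric])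
    qed
  qed
qed

lemma induced_by_argmin_axes: "induced_by f c \<Longrightarrow> profile P \<Longrightarrow> f P = argmin_axes (total_cost c P)"
  by (simp add: induced_by_def argmin_axes_def)

lemma total_cost_sum:
  "total_cost (\<lambda>A ax. \<Sum>i\<in>I. c i A ax) P ax = (\<Sum>i\<in>I. total_cost (c i) P ax)"
  by (induction P) (auto simp: total_cost_def sum.distrib)

lemma total_cost_diff:
  "total_cost (\<lambda>A ax. c A ax - d A) P ax = total_cost c P ax - sum_list (map d P)"
  by (induction P) (auto simp: total_cost_def)

lemma total_cost_single: "total_cost c [A] = c A"
  by (simp add: total_cost_def fun_eq_iff)

lemma profile_map_image: "profile P \<Longrightarrow> profile (map ((`) \<pi>) P)"
  by (auto simp: profile_def ballot_def)

definition rev_if :: "bool \<Rightarrow> 'a list \<Rightarrow> 'a list" where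
  "rev_if b ax = (if b then rev ax else ax)"

lemma relabel_image_axes:
  assumes "bij (\<pi>::'a::finite \<Rightarrow> 'a)"
  shows "(\<lambda>x. map \<pi> (rev_if b x)) ` axes = axes"
proof -
  have "(\<lambda>x. map \<pi> (rev_if b x)) ` axes = map \<pi> ` rev_if b ` axes" by (simp add: image_image)
  also have "rev_if b ` axes = axes" by (simp add: rev_if_def rev_image_axes)
  finally show ?thesis using map_image_axes[OF assms] by simp
qed

definition sym_cost :: "('a::finite set \<Rightarrow> 'a list \<Rightarrow> real) \<Rightarrow> 'a set \<Rightarrow> 'a list \<Rightarrow> real" where
  "sym_cost c A ax = (\<Sum>(\<pi>, b)\<in>{\<pi>. bij \<pi>} \<times> UNIV. c (\<pi> ` A) (map \<pi> (rev_if b ax)))"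

lemma argmin_total_sym_cost:
  fixes f :: "'a::finite set list \<Rightarrow> 'a list set"
  assumes ind: "induced_by f c" and ar: "axis_rule f" and neu: "neutral f" and P: "profile P"
  shows "argmin_axes (total_cost (sym_cost c) P) = f P"
proof -
  let ?I = "{\<pi>::'a \<Rightarrow> 'a. bij \<pi>} \<times> (UNIV::bool set)"
  let ?h = "\<lambda>(\<pi>, b) ax. total_cost c (map ((`) \<pi>) P) (map \<pi> (rev_if b ax))"
  have sum: "total_cost (sym_cost c) P = (\<lambda>ax. \<Sum>p\<in>?I. ?h p ax)"
    unfolding sym_cost_def[abs_def]
    by (rule ext, subst total_cost_sum, rule sum.cong) (auto simp: total_cost_def o_def)
  have fP: "f P \<noteq> {}" "f P \<subseteq> axes" "\<And>ax. ax \<in> f P \<Longrightarrow> rev ax \<in> f P"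
    using ar P by (auto simp: axis_rule_def)
  have "argmin_axes (?h (\<pi>, b)) = f P" if \<pi>: "bij \<pi>" for \<pi> b
  proof -
    have "argmin_axes (?h (\<pi>, b))
        = {x\<in>axes. map \<pi> (rev_if b x) \<in> argmin_axes (total_cost c (map ((`) \<pi>) P))}"
      using argmin_axes_reindex[OF relabel_image_axes[OF \<pi>]] by simp
    also have "argmin_axes (total_cost c (map ((`) \<pi>) P)) = map \<pi> ` f P"
      using induced_by_argmin_axes[OF ind profile_map_image[OF P]] neu \<pi> P
      unfolding neutral_def by metis
    also have "{x\<in>axes. map \<pi> (rev_if b x) \<in> map \<pi> ` f P} = {x\<in>axes. rev_if b x \<in> f P}"
      using inj_mapI[OF bij_is_inj[OF \<pi>]] by (auto simp: inj_image_mem_iff)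
    also have "\<dots> = f P"
      using fP by (auto simp: rev_if_def) (metis rev_rev_ident)
    finally show ?thesis .
  qed
  then have "argmin_axes (\<lambda>x. \<Sum>p\<in>?I. ?h p x) = f P"
    using fP(1) by (intro argmin_axes_sum) auto
  then show ?thesis using sum by simp
qed

lemma sym_cost_relabel:
  assumes \<sigma>: "bij (\<sigma>::'a::finite \<Rightarrow> 'a)"
  shows "sym_cost c (\<sigma> ` A) (map \<sigma> ax) = sym_cost c A ax"
proof -
  have inv: "\<sigma> \<circ> inv \<sigma> = id" "inv \<sigma> \<circ> \<sigma> = id"
    using \<sigma> by (simp_all add: bij_is_surj bij_is_inj surj_iff[THEN iffD1] inj_iff[THEN iffD1])
  have inv_bij: "bij (inv \<sigma>)" using \<sigma> by (simp add: bij_imp_bij_inv)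
  show ?thesis
    unfolding sym_cost_def
    by (rule sum.reindex_bij_witness[where j = "\<lambda>p. (fst p \<circ> \<sigma>, snd p)"
                                       and i = "\<lambda>p. (fst p \<circ> inv \<sigma>, snd p)"])
       (use inv inv_bij \<sigma> in \<open>auto simp: comp_assoc rev_if_def image_comp rev_map intro: bij_comp\<close>)
qed

lemma sym_cost_rev: "sym_cost c A (rev ax) = sym_cost c A ax"
  unfolding sym_cost_def
  by (rule sum.reindex_bij_witness[where j = "\<lambda>(\<pi>, b). (\<pi>, \<not> b)" and i = "\<lambda>(\<pi>, b). (\<pi>, \<not> b)"])
     (auto simp: rev_if_def)

definition norm_cost :: "('a::finite set \<Rightarrow> 'a list \<Rightarrow> real) \<Rightarrow> 'a set \<Rightarrow> 'a list \<Rightarrow> real" where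
  "norm_cost c A ax = sym_cost c A ax - Min (sym_cost c A ` axes)"

lemma norm_cost_relabel:
  assumes \<sigma>: "bij (\<sigma>::'a::finite \<Rightarrow> 'a)"
  shows "norm_cost c (\<sigma> ` A) (map \<sigma> ax) = norm_cost c A ax"
proof -
  have "sym_cost c (\<sigma> ` A) ` axes = sym_cost c (\<sigma> ` A) ` map \<sigma> ` axes"
    using map_image_axes[OF \<sigma>] by simp
  also have "\<dots> = sym_cost c A ` axes"
    by (simp add: image_comp o_def sym_cost_relabel[OF \<sigma>])
  finally show ?thesis by (simp add: norm_cost_def sym_cost_relabel[OF \<sigma>])
qed

lemma norm_cost_rev: "norm_cost c A (rev ax) = norm_cost c A ax"
  by (simp add: norm_cost_def sym_cost_rev)

lemma norm_cost_nonneg: "ax \<in> axes \<Longrightarrow> norm_cost c A ax \<ge> 0"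
  by (simp add: norm_cost_def finite_axes)

lemma norm_cost_eq_0_iff:
  assumes "ax \<in> axes"
  shows "norm_cost c A ax = 0 \<longleftrightarrow> ax \<in> argmin_axes (sym_cost c A)"
proof -
  have "Min (sym_cost c A ` axes) \<in> sym_cost c A ` axes"
    by (rule Min_in) (simp_all add: finite_axes axes_nonempty)
  moreover have "\<forall>y\<in>axes. Min (sym_cost c A ` axes) \<le> sym_cost c A y"
    by (simp add: finite_axes)
  ultimately show ?thesis using assms
    by (auto simp: norm_cost_def argmin_axes_def intro!: antisym)
qed

lemma induced_by_norm_cost:
  assumes "induced_by f c" "axis_rule f" "neutral f"
  shows "induced_by f (norm_cost c)"
  unfolding induced_by_def
proof (intro conjI allI impI)
  fix P :: "'a set list" assume P: "profile P"
  have "total_cost (norm_cost c) P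
      = (\<lambda>ax. total_cost (sym_cost c) P ax - sum_list (map (\<lambda>A. Min (sym_cost c A ` axes)) P))"
    unfolding norm_cost_def[abs_def] by (rule ext, rule total_cost_diff)
  then have "argmin_axes (total_cost (norm_cost c) P) = f P"
    using argmin_total_sym_cost[OF assms P] by (simp add: argmin_axes_diff_const)
  then show "f P = {ax \<in> axes. \<forall>ax'\<in>axes. total_cost (norm_cost c) P ax \<le> total_cost (norm_cost c) P ax'}"
    by (simp add: argmin_axes_def)
qed (rule norm_cost_nonneg)

lemma ex_interval_axis: "\<exists>ax\<in>axes. is_interval (A :: 'a::finite set) ax"
proof -
  obtain xs where xs: "set xs = A" "distinct xs" using finite_distinct_list[of A] by auto
  obtain ys where ys: "set ys = - A" "distinct ys" using finite_distinct_list[of "- A"] by auto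
  let ?ax = "xs @ ys"
  have "?ax \<in> axes" using xs ys by (auto simp: axes_def)
  moreover have "is_interval A ?ax"
    unfolding is_interval_def before_def
  proof (intro ballI allI impI)
    fix a b c assume "b \<in> A" and "(\<exists>i j. i < j \<and> j < length ?ax \<and> ?ax ! i = a \<and> ?ax ! j = c) \<and>
       (\<exists>i j. i < j \<and> j < length ?ax \<and> ?ax ! i = c \<and> ?ax ! j = b)"
    then obtain i j where ij: "i < j" "j < length ?ax" "?ax ! i = c" "?ax ! j = b" by blast
    have "j < length xs"
    proof (rule ccontr)
      assume j: "\<not> j < length xs"
      then have "b = ys ! (j - length xs)" using ij(4) by (simp add: nth_append)
      moreover have "j - length xs < length ys" using ij(2) j by simp
      ultimately have "b \<in> - A" using ys(1) by (metis nth_mem)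
      then show False using \<open>b \<in> A\<close> by simp
    qed
    then have "c = xs ! i" "i < length xs" using ij(1,3) by (simp_all add: nth_append)
    then show "c \<in> A" using xs(1) by (metis nth_mem)
  qed
  ultimately show ?thesis by blast
qed

lemma norm_cost_eq_0_iff_interval:
  assumes "induced_by f c" "axis_rule f" "neutral f" "consistent_with_linearity f"
    and "ballot A" "ax \<in> axes"
  shows "norm_cost c A ax = 0 \<longleftrightarrow> is_interval A ax"
proof -
  have P: "profile [A]" using assms(5) by (simp add: profile_def)
  have "linear_profile [A]" using ex_interval_axis[of A] by (auto simp: linear_profile_def con_def)
  then have "f [A] = con [A]" using assms(4) P by (simp add: consistent_with_linearity_def)
  moreover have "f [A] = argmin_axes (sym_cost c A)"
    using argmin_total_sym_cost[OF assms(1-3) P] by (simp add: total_cost_single)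
  ultimately show ?thesis using norm_cost_eq_0_iff[OF assms(6)] assms(6) by (auto simp: con_def)
qed

lemma approval_vector_relabel: "inj \<sigma> \<Longrightarrow> approval_vector (\<sigma> ` A) (map \<sigma> ax) = approval_vector A ax"
  by (simp add: approval_vector_def inj_image_mem_iff)

lemma relabel_if_approval_vector_eq:
  fixes ax bx :: "'a::finite list"
  assumes ax: "ax \<in> axes" and bx: "bx \<in> axes"
    and eq: "approval_vector A ax = approval_vector B bx"
  obtains \<sigma> where "bij \<sigma>" "map \<sigma> ax = bx" "\<sigma> ` A = B"
proof -
  have len: "length ax = length bx"
    using ax bx by (auto simp: axes_def dest!: distinct_card)
  have dax: "distinct ax" "set ax = UNIV" and dbx: "distinct bx" "set bx = UNIV"
    using ax bx by (auto simp: axes_def)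
  define \<sigma> where "\<sigma> c = the (map_of (zip ax bx) c)" for c
  have \<sigma>_nth: "\<sigma> (ax ! i) = bx ! i" if "i < length ax" for i
    using map_of_zip_nth[OF len dax(1)] that len by (simp add: \<sigma>_def)
  have map_\<sigma>: "map \<sigma> ax = bx"
    by (rule nth_equalityI) (simp_all add: len \<sigma>_nth)
  then have "inj \<sigma>" using dax dbx by (metis distinct_map)
  then have bij: "bij \<sigma>" by (simp add: bij_def finite_UNIV_inj_surj)
  have "approval_vector (\<sigma> ` A) bx = approval_vector B bx"
    using eq approval_vector_relabel[OF \<open>inj \<sigma>\<close>, of A ax] map_\<sigma> by simp
  then have "\<sigma> ` A = B" using dbx(2) by (auto simp: approval_vector_def)
  with bij map_\<sigma> show thesis by (rule that)
qed

lemma factor_through_approval_vector: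
  fixes c :: "'a::finite set \<Rightarrow> 'a list \<Rightarrow> real"
  assumes relabel: "\<And>\<sigma> A ax. bij \<sigma> \<Longrightarrow> c (\<sigma> ` A) (map \<sigma> ax) = c A ax"
    and nonneg: "\<And>A ax. ax \<in> axes \<Longrightarrow> c A ax \<ge> 0"
  obtains g where "\<And>x. g x \<ge> 0" "\<And>A ax. ax \<in> axes \<Longrightarrow> c A ax = g (approval_vector A ax)"
proof
  define Q :: "bool list \<Rightarrow> 'a set \<times> 'a list \<Rightarrow> bool"
    where "Q x = (\<lambda>(A, ax). ax \<in> axes \<and> approval_vector A ax = x)" for x
  let ?g = "\<lambda>x. if \<exists>p. Q x p then case_prod c (SOME p. Q x p) else 0"
  show "?g x \<ge> 0" for x
  proof (cases "\<exists>p. Q x p")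
    case True
    then have "Q x (SOME p. Q x p)" by (rule someI_ex)
    then show ?thesis using nonneg by (auto simp: Q_def split: prod.splits)
  qed simp
  fix A :: "'a set" and ax :: "'a list" assume ax: "ax \<in> axes"
  let ?x = "approval_vector A ax"
  have "Q ?x (A, ax)" using ax by (simp add: Q_def)
  moreover obtain B bx where Bbx: "(SOME p. Q ?x p) = (B, bx)" by fastforce
  ultimately have "bx \<in> axes" "?x = approval_vector B bx"
    using someI[of "Q ?x" "(A, ax)"] by (auto simp: Q_def)
  then obtain \<sigma> where "bij \<sigma>" "map \<sigma> ax = bx" "\<sigma> ` A = B"
    using relabel_if_approval_vector_eq[OF ax] by blast
  then have "c A ax = c B bx" using relabel by metis
  then show "c A ax = ?g ?x" using \<open>Q ?x (A, ax)\<close> Bbx by auto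
qed

lemma neutral_if_relabel_invariant:
  fixes f :: "'a::finite set list \<Rightarrow> 'a list set"
  assumes ind: "induced_by f c"
    and relabel: "\<And>\<pi> A ax. bij \<pi> \<Longrightarrow> ballot A \<Longrightarrow> ax \<in> axes \<Longrightarrow> c (\<pi> ` A) (map \<pi> ax) = c A ax"
  shows "neutral f"
  unfolding neutral_def
proof (intro allI impI)
  fix \<pi> :: "'a \<Rightarrow> 'a" and P :: "'a set list" assume \<pi>: "bij \<pi>" and P: "profile P"
  let ?Q = "map ((`) \<pi>) P"
  have Q: "profile ?Q" using P by (rule profile_map_image)
  have relabel_P: "map (\<lambda>A. c (\<pi> ` A) (map \<pi> ax)) P = map (\<lambda>A. c A ax) P"
    if "ax \<in> axes" for ax
    using P relabel[OF \<pi> _ that] by (auto simp: profile_def)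
  have "f P = argmin_axes (total_cost c P)" by (rule induced_by_argmin_axes[OF ind P])
  also have "\<dots> = argmin_axes (\<lambda>ax. total_cost c ?Q (map \<pi> ax))"
    by (rule argmin_axes_cong) (simp add: total_cost_def o_def relabel_P)
  also have "\<dots> = {x\<in>axes. map \<pi> x \<in> argmin_axes (total_cost c ?Q)}"
    by (rule argmin_axes_reindex[OF map_image_axes[OF \<pi>]])
  also have "argmin_axes (total_cost c ?Q) = f ?Q"
    by (rule induced_by_argmin_axes[OF ind Q, symmetric])
  finally have fP: "f P = {x\<in>axes. map \<pi> x \<in> f ?Q}" .
  have "f ?Q \<subseteq> map \<pi> ` axes"
    using induced_by_argmin_axes[OF ind Q] argmin_axes_subset map_image_axes[OF \<pi>] by simp
  then show "f ?Q = map \<pi> ` f P" using fP by auto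
qed

lemma consistent_with_linearity_if_zero_iff_interval:
  fixes f :: "'a::finite set list \<Rightarrow> 'a list set"
  assumes ind: "induced_by f c"
    and zero: "\<And>A ax. ballot A \<Longrightarrow> ax \<in> axes \<Longrightarrow> c A ax = 0 \<longleftrightarrow> is_interval A ax"
  shows "consistent_with_linearity f"
  unfolding consistent_with_linearity_def
proof (intro allI impI)
  fix P :: "'a set list" assume P: "profile P" and lin: "linear_profile P"
  have nonneg: "c A ax \<ge> 0" if "A \<in> set P" "ax \<in> axes" for A ax
    using ind P that by (auto simp: induced_by_def profile_def)
  have total_nonneg: "total_cost c P ax \<ge> 0" if "ax \<in> axes" for ax
    using nonneg that by (auto simp: total_cost_def intro!: sum_list_nonneg)
  have total_zero: "total_cost c P ax = 0 \<longleftrightarrow> ax \<in> con P" if ax: "ax \<in> axes" for ax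
  proof -
    have "total_cost c P ax = 0 \<longleftrightarrow> (\<forall>A\<in>set P. c A ax = 0)"
      unfolding total_cost_def using nonneg ax by (subst sum_list_nonneg_eq_0_iff) auto
    also have "\<dots> \<longleftrightarrow> ax \<in> con P" using P zero ax by (auto simp: con_def profile_def)
    finally show ?thesis .
  qed
  obtain z where z: "z \<in> con P" using lin by (auto simp: linear_profile_def)
  then have z_axes: "z \<in> axes" by (simp add: con_def)
  have "argmin_axes (total_cost c P) = con P"
  proof (intro equalityI subsetI)
    fix x assume "x \<in> argmin_axes (total_cost c P)"
    then have "x \<in> axes" "total_cost c P x \<le> total_cost c P z"
      using z_axes by (auto simp: argmin_axes_def)
    then show "x \<in> con P" using total_zero total_nonneg z z_axes by (metis antisym)
  next
    fix x assume "x \<in> con P"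
    then have "x \<in> axes" "total_cost c P x = 0" using total_zero by (auto simp: con_def)
    then show "x \<in> argmin_axes (total_cost c P)" using total_nonneg by (auto simp: argmin_axes_def)
  qed
  then show "f P = con P" using induced_by_argmin_axes[OF ind P] by simp
qed

theorem mainTheorem4:
  fixes f :: "'a::finite set list \<Rightarrow> 'a list set"
  assumes "scoring_rule f"
  shows "(neutral f \<and> consistent_with_linearity f) \<longleftrightarrow>
    (\<exists>cost. induced_by f cost \<and>
       (\<forall>A ax. ballot A \<longrightarrow> ax \<in> axes \<longrightarrow>
          cost A ax \<ge> 0 \<and> (cost A ax = 0 \<longleftrightarrow> is_interval A ax)) \<and>
       (\<forall>A ax. ballot A \<longrightarrow> ax \<in> axes \<longrightarrow> cost A ax = cost A (rev ax)) \<and>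
       (\<exists>g :: bool list \<Rightarrow> real.
          (\<forall>x. length x = card (UNIV :: 'a set) \<longrightarrow> g x \<ge> 0) \<and>
          (\<forall>A ax. ballot A \<longrightarrow> ax \<in> axes \<longrightarrow>
             cost A ax = g (approval_vector A ax) \<and>
             cost A ax = g (approval_vector A (rev ax)))))"
    (is "_ \<longleftrightarrow> (\<exists>cost. ?good cost)")
proof
  assume neu_cwl: "neutral f \<and> consistent_with_linearity f"
  obtain c where ar: "axis_rule f" and c: "induced_by f c"
    using assms by (auto simp: scoring_rule_def)
  obtain g where g: "\<And>x. g x \<ge> 0" "\<And>A ax. ax \<in> axes \<Longrightarrow> norm_cost c A ax = g (approval_vector A ax)"
    using factor_through_approval_vector[of "norm_cost c", OF norm_cost_relabel norm_cost_nonneg]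
    by blast
  show "\<exists>cost. ?good cost"
  proof (intro exI[of _ "norm_cost c"] conjI allI impI exI[of _ g])
    show "induced_by f (norm_cost c)" using induced_by_norm_cost[OF c ar] neu_cwl by blast
  next
    fix A :: "'a set" and ax :: "'a list" assume A: "ballot A" and ax: "ax \<in> axes"
    show "norm_cost c A ax \<ge> 0" using ax by (rule norm_cost_nonneg)
    show "norm_cost c A ax = 0 \<longleftrightarrow> is_interval A ax"
      using norm_cost_eq_0_iff_interval[OF c ar _ _ A ax] neu_cwl by blast
    show "norm_cost c A ax = norm_cost c A (rev ax)" by (rule norm_cost_rev[symmetric])
  next
    fix x :: "bool list" show "g x \<ge> 0" by (rule g(1))
  next
    fix A :: "'a set" and ax :: "'a list" assume ax: "ax \<in> axes"
    show "norm_cost c A ax = g (approval_vector A ax)" using ax by (rule g(2))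
    show "norm_cost c A ax = g (approval_vector A (rev ax))"
      using g(2)[OF rev_in_axes[OF ax]] by (simp add: norm_cost_rev)
  qed
next
  assume "\<exists>cost. ?good cost"
  then obtain cost g where ind: "induced_by f cost"
    and zero: "\<And>A ax. ballot A \<Longrightarrow> ax \<in> axes \<Longrightarrow> cost A ax = 0 \<longleftrightarrow> is_interval A ax"
    and factor: "\<And>A ax. ballot A \<Longrightarrow> ax \<in> axes \<Longrightarrow> cost A ax = g (approval_vector A ax)"
    by blast
  have relabel: "cost (\<pi> ` A) (map \<pi> ax) = cost A ax"
    if "bij \<pi>" "ballot A" "ax \<in> axes" for \<pi> A ax
    using that factor[of "\<pi> ` A" "map \<pi> ax"] factor[of A ax]
    by (simp add: ballot_def map_in_axes approval_vector_relabel bij_is_inj)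
  have "neutral f" using ind relabel by (rule neutral_if_relabel_invariant)
  moreover have "consistent_with_linearity f"
    using ind zero by (rule consistent_with_linearity_if_zero_iff_interval)
  ultimately show "neutral f \<and> consistent_with_linearity f" ..
qed

end
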